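(* Let $A$ be a semiprime algebra whose commutator is commutative and distributive w.r.t. arbitrary joins. Then for every $\theta\in\mathrm{Con}(A)$, $\theta^\perp=\bigcap\big(V_A(\theta^\perp)\cap\mathrm{Min}(A)\big)$ (with the intersection of the empty family being $\nabla_A$).
   Context: Let $A$ be an algebra of a fixed signature. $\mathrm{Con}(A)$ is the complete lattice of congruences of $A$, with bottom $\Delta_A=\{(a,a):a\in A\}$ and top $\nabla_A=A^2$. For $\alpha,\beta,\mu\in\mathrm{Con}(A)$, write $C(\alpha,\beta;\mu)$ if for all $n,k\in\mathbb N$, every term $t$ of arity $n+k$, all $(a_i,b_i)\in\alpha$ ($1\le i\le n$) and all $(c_j,d_j)\in\beta$ ($1\le j\le k$): $(t^A(a_1,\dots,a_n,c_1,\dots,c_k),t^A(a_1,\dots,a_n,d_1,\dots,d_k))\in\mu$ iff $(t^A(b_1,\dots,b_n,c_1,\dots,c_k),t^A(b_1,\dots,b_n,d_1,\dots,d_k))\in\mu$. The (term condition) commutator is $[\alpha,\beta]_A=\bigcap\{\mu\in\mathrm{Con}(A): C(\alpha,\beta;\mu)\}$; it satisfies $[\alpha,\beta]_A\subseteq\alpha\cap\beta$ and is monotone in each argument. "The commutator of $A$ is commutative and distributive w.r.t. arbitrary joins" means $[\alpha,\beta]_A=[\beta,\alpha]_A$ and $[\bigvee_{i\in I}\alpha_i,\beta]_A=\bigvee_{i\in I}[\alpha_i,\beta]_A$ for all $\alpha,\beta$ and all families $(\alpha_i)_{i\in I}$ in $\mathrm{Con}(A)$. A congruence $\phi\neq\nabla_A$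 is prime if for all $\alpha,\beta\in\mathrm{Con}(A)$, $[\alpha,\beta]_A\subseteq\phi$ implies $\alpha\subseteq\phi$ or $\beta\subseteq\phi$; $\mathrm{Spec}(A)$ is the set of prime congruences and $\mathrm{Min}(A)$ the set of minimal elements of $(\mathrm{Spec}(A),\subseteq)$. For $\theta\in\mathrm{Con}(A)$: $V_A(\theta)=\{\phi\in\mathrm{Spec}(A):\theta\subseteq\phi\}$ and $\rho_A(\theta)=\bigcap V_A(\theta)$ (the intersection of the empty family being $\nabla_A$). $A$ is semiprime if $\rho_A(\Delta_A)=\Delta_A$. For $\beta,\gamma\in\mathrm{Con}(A)$: $\beta\to\gamma=\bigvee\{\alpha\in\mathrm{Con}(A):[\alpha,\beta]_A\subseteq\gamma\}$ and $\beta^\perp=\beta\to\Delta_A$. *)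

theory Defs
  imports Main
begin

text \<open>An algebra of a fixed signature: function symbols of type 'f with arity
  function ar, interpreted by ops on the carrier UNIV :: 'a set.\<close>

datatype 'f trm = Var nat | App 'f "'f trm list"

fun wf_trm :: "('f \<Rightarrow> nat) \<Rightarrow> 'f trm \<Rightarrow> bool" where
  "wf_trm ar (Var i) = True"
| "wf_trm ar (App f ts) = (length ts = ar f \<and> (\<forall>t\<in>set ts. wf_trm ar t))"

fun vars_trm :: "'f trm \<Rightarrow> nat set" where
  "vars_trm (Var i) = {i}"
| "vars_trm (App f ts) = (\<Union>t\<in>set ts. vars_trm t)"

fun eval_trm :: "('f \<Rightarrow> 'a list \<Rightarrow> 'a) \<Rightarrow> (nat \<Rightarrow> 'a) \<Rightarrow> 'f trm \<Rightarrow> 'a" where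
  "eval_trm ops x (Var i) = x i"
| "eval_trm ops x (App f ts) = ops f (map (eval_trm ops x) ts)"

definition is_term :: "('f \<Rightarrow> nat) \<Rightarrow> nat \<Rightarrow> 'f trm \<Rightarrow> bool" where
  "is_term ar m t \<longleftrightarrow> wf_trm ar t \<and> vars_trm t \<subseteq> {..<m}"

definition is_con :: "('f \<Rightarrow> nat) \<Rightarrow> ('f \<Rightarrow> 'a list \<Rightarrow> 'a) \<Rightarrow> 'a rel \<Rightarrow> bool" where
  "is_con ar ops \<theta> \<longleftrightarrow> equiv UNIV \<theta> \<and>
     (\<forall>f xs ys. length xs = ar f \<longrightarrow> length ys = ar f \<longrightarrow>
        (\<forall>i<ar f. (xs ! i, ys ! i) \<in> \<theta>) \<longrightarrow> (ops f xs, ops f ys) \<in> \<theta>)"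

definition Con :: "('f \<Rightarrow> nat) \<Rightarrow> ('f \<Rightarrow> 'a list \<Rightarrow> 'a) \<Rightarrow> 'a rel set" where
  "Con ar ops = {\<theta>. is_con ar ops \<theta>}"

definition con_join :: "('f \<Rightarrow> nat) \<Rightarrow> ('f \<Rightarrow> 'a list \<Rightarrow> 'a) \<Rightarrow> 'a rel set \<Rightarrow> 'a rel" where
  "con_join ar ops S = \<Inter>{\<theta> \<in> Con ar ops. \<Union>S \<subseteq> \<theta>}"

text \<open>the assignment (a_1..a_n, c_1..c_k) as a function on variable indices\<close>
definition asg :: "nat \<Rightarrow> (nat \<Rightarrow> 'a) \<Rightarrow> (nat \<Rightarrow> 'a) \<Rightarrow> nat \<Rightarrow> 'a" where
  "asg n a c i = (if i < n then a i else c (i - n))"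

definition centralizes :: "('f \<Rightarrow> nat) \<Rightarrow> ('f \<Rightarrow> 'a list \<Rightarrow> 'a) \<Rightarrow> 'a rel \<Rightarrow> 'a rel \<Rightarrow> 'a rel \<Rightarrow> bool" where
  "centralizes ar ops \<alpha> \<beta> \<mu> \<longleftrightarrow>
     (\<forall>n k t a b c d. is_term ar (n + k) t \<longrightarrow>
        (\<forall>i<n. (a i, b i) \<in> \<alpha>) \<longrightarrow> (\<forall>j<k. (c j, d j) \<in> \<beta>) \<longrightarrow>
        ((eval_trm ops (asg n a c) t, eval_trm ops (asg n a d) t) \<in> \<mu> \<longleftrightarrow>
         (eval_trm ops (asg n b c) t, eval_trm ops (asg n b d) t) \<in> \<mu>))"

definition comm :: "('f \<Rightarrow> nat) \<Rightarrow> ('f \<Rightarrow> 'a list \<Rightarrow> 'a) \<Rightarrow> 'a rel \<Rightarrow> 'a rel \<Rightarrow> 'a rel" where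
  "comm ar ops \<alpha> \<beta> = \<Inter>{\<mu> \<in> Con ar ops. centralizes ar ops \<alpha> \<beta> \<mu>}"

definition is_prime :: "('f \<Rightarrow> nat) \<Rightarrow> ('f \<Rightarrow> 'a list \<Rightarrow> 'a) \<Rightarrow> 'a rel \<Rightarrow> bool" where
  "is_prime ar ops \<phi> \<longleftrightarrow> \<phi> \<in> Con ar ops \<and> \<phi> \<noteq> UNIV \<and>
     (\<forall>\<alpha>\<in>Con ar ops. \<forall>\<beta>\<in>Con ar ops. comm ar ops \<alpha> \<beta> \<subseteq> \<phi> \<longrightarrow> \<alpha> \<subseteq> \<phi> \<or> \<beta> \<subseteq> \<phi>)"

definition Spec :: "('f \<Rightarrow> nat) \<Rightarrow> ('f \<Rightarrow> 'a list \<Rightarrow> 'a) \<Rightarrow> 'a rel set" where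
  "Spec ar ops = {\<phi>. is_prime ar ops \<phi>}"

definition MinSpec :: "('f \<Rightarrow> nat) \<Rightarrow> ('f \<Rightarrow> 'a list \<Rightarrow> 'a) \<Rightarrow> 'a rel set" where
  "MinSpec ar ops = {\<phi> \<in> Spec ar ops. \<forall>\<psi>\<in>Spec ar ops. \<psi> \<subseteq> \<phi> \<longrightarrow> \<psi> = \<phi>}"

definition V :: "('f \<Rightarrow> nat) \<Rightarrow> ('f \<Rightarrow> 'a list \<Rightarrow> 'a) \<Rightarrow> 'a rel \<Rightarrow> 'a rel set" where
  "V ar ops \<theta> = {\<phi> \<in> Spec ar ops. \<theta> \<subseteq> \<phi>}"

text \<open>HOL's intersection of the empty family is UNIV = nabla\<close>
definition rad :: "('f \<Rightarrow> nat) \<Rightarrow> ('f \<Rightarrow> 'a list \<Rightarrow> 'a) \<Rightarrow> 'a rel \<Rightarrow> 'a rel" where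
  "rad ar ops \<theta> = \<Inter>(V ar ops \<theta>)"

definition semiprime :: "('f \<Rightarrow> nat) \<Rightarrow> ('f \<Rightarrow> 'a list \<Rightarrow> 'a) \<Rightarrow> bool" where
  "semiprime ar ops \<longleftrightarrow> rad ar ops Id = Id"

definition rimp :: "('f \<Rightarrow> nat) \<Rightarrow> ('f \<Rightarrow> 'a list \<Rightarrow> 'a) \<Rightarrow> 'a rel \<Rightarrow> 'a rel \<Rightarrow> 'a rel" where
  "rimp ar ops \<beta> \<gamma> = con_join ar ops {\<alpha> \<in> Con ar ops. comm ar ops \<alpha> \<beta> \<subseteq> \<gamma>}"

definition perp :: "('f \<Rightarrow> nat) \<Rightarrow> ('f \<Rightarrow> 'a list \<Rightarrow> 'a) \<Rightarrow> 'a rel \<Rightarrow> 'a rel" where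
  "perp ar ops \<beta> = rimp ar ops \<beta> Id"

end

theory Submission
  imports Defs
begin

(* A prime congruence \<psi> contains [\<theta>\<^sup>\<perp>, \<theta>] \<subseteq> \<Delta> (distributivity of the commutator
   over the join defining \<theta>\<^sup>\<perp>), hence contains \<theta>\<^sup>\<perp> or \<theta>.  If X is the intersection
   of the minimal primes above \<theta>\<^sup>\<perp>, then [X, \<theta>] \<subseteq> X \<inter> \<theta> lies in every minimal
   prime: in those containing \<theta>\<^sup>\<perp> because they contain X, in the others because
   they contain \<theta>.  Every prime contains a minimal one (Zorn), so [X, \<theta>] lies
   in the radical of \<Delta>, which is \<Delta> by semiprimeness; thus X \<subseteq> \<theta>\<^sup>\<perp>. *)

lemma Inter_in_Con:
  assumes "S \<subseteq> Con ar ops"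
  shows "\<Inter>S \<in> Con ar ops"
proof -
  have equiv: "equiv UNIV \<theta>" if "\<theta> \<in> S" for \<theta>
    using assms that by (auto simp: Con_def is_con_def)
  have "equiv UNIV (\<Inter>S)"
  proof (rule equivI)
    show "\<Inter>S \<subseteq> UNIV \<times> UNIV" by simp
    show "refl (\<Inter>S)"
      using equiv by (auto simp: equiv_def refl_on_def)
    show "sym (\<Inter>S)"
      using equiv by (auto simp: equiv_def intro!: symI dest: symD)
    show "trans (\<Inter>S)"
      using equiv by (auto simp: equiv_def intro!: transI dest: transD)
  qed
  moreover have "(ops f xs, ops f ys) \<in> \<theta>"
    if "\<theta> \<in> S" "length xs = ar f" "length ys = ar f" "\<forall>i<ar f. (xs ! i, ys ! i) \<in> \<Inter>S"
    for \<theta> f xs ys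
    using assms that by (auto simp: Con_def is_con_def)
  ultimately show ?thesis
    by (auto simp: Con_def is_con_def)
qed

lemma con_join_in_Con: "con_join ar ops S \<in> Con ar ops"
  unfolding con_join_def by (rule Inter_in_Con) blast

lemma con_join_upper: "\<alpha> \<in> S \<Longrightarrow> \<alpha> \<subseteq> con_join ar ops S"
  unfolding con_join_def by blast

lemma con_join_least: "\<theta> \<in> Con ar ops \<Longrightarrow> \<Union>S \<subseteq> \<theta> \<Longrightarrow> con_join ar ops S \<subseteq> \<theta>"
  unfolding con_join_def by blast

lemma Id_in_Con: "Id \<in> Con ar ops"
  by (simp add: Con_def is_con_def equiv_def refl_on_def sym_def trans_def) (metis nth_equalityI)

lemma Id_subset_Con: "\<theta> \<in> Con ar ops \<Longrightarrow> Id \<subseteq> \<theta>"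
  by (auto simp: Con_def is_con_def equiv_def refl_on_def)

lemma eval_trm_cong_Con:
  assumes "\<beta> \<in> Con ar ops" and "wf_trm ar t" and "\<forall>i\<in>vars_trm t. (x i, y i) \<in> \<beta>"
  shows "(eval_trm ops x t, eval_trm ops y t) \<in> \<beta>"
  using assms(2,3)
proof (induction t)
  case (App f ts)
  then have "\<forall>i<ar f. (map (eval_trm ops x) ts ! i, map (eval_trm ops y) ts ! i) \<in> \<beta>"
    by (auto simp: in_set_conv_nth)
  with App.prems assms(1) show ?case
    by (simp add: Con_def is_con_def)
qed simp

lemma eval_asg_cong_Con:
  assumes "\<beta> \<in> Con ar ops" and "is_term ar (n + k) t"
    and "\<forall>i<n. (a i, b i) \<in> \<beta>" and "\<forall>j<k. (c j, d j) \<in> \<beta>"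
  shows "(eval_trm ops (asg n a c) t, eval_trm ops (asg n b d) t) \<in> \<beta>"
proof (rule eval_trm_cong_Con[OF assms(1)])
  show "wf_trm ar t" using assms(2) by (simp add: is_term_def)
  show "\<forall>i\<in>vars_trm t. (asg n a c i, asg n b d i) \<in> \<beta>"
    using assms(2-4) by (auto simp: is_term_def asg_def)
qed

lemma centralizes_right_self:
  assumes "\<beta> \<in> Con ar ops"
  shows "centralizes ar ops \<alpha> \<beta> \<beta>"
  unfolding centralizes_def
proof (intro allI impI)
  fix n k t a b and c d :: "nat \<Rightarrow> 'a"
  assume t: "is_term ar (n + k) t" and cd: "\<forall>j<k. (c j, d j) \<in> \<beta>"
  have "\<forall>i<n. (e i, e i) \<in> \<beta>" for e :: "nat \<Rightarrow> 'a"
    using Id_subset_Con[OF assms] by auto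
  then have "(eval_trm ops (asg n e c) t, eval_trm ops (asg n e d) t) \<in> \<beta>" for e
    using eval_asg_cong_Con[OF assms t _ cd] by simp
  then show "(eval_trm ops (asg n a c) t, eval_trm ops (asg n a d) t) \<in> \<beta> \<longleftrightarrow>
      (eval_trm ops (asg n b c) t, eval_trm ops (asg n b d) t) \<in> \<beta>"
    by simp
qed

lemma centralizes_left_self:
  assumes "\<alpha> \<in> Con ar ops"
  shows "centralizes ar ops \<alpha> \<beta> \<alpha>"
  unfolding centralizes_def
proof (intro allI impI)
  fix n k t a b and c d :: "nat \<Rightarrow> 'a"
  assume t: "is_term ar (n + k) t" and ab: "\<forall>i<n. (a i, b i) \<in> \<alpha>"
  have "\<forall>j<k. (e j, e j) \<in> \<alpha>" for e :: "nat \<Rightarrow> 'a"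
    using Id_subset_Con[OF assms] by auto
  then have "(eval_trm ops (asg n a e) t, eval_trm ops (asg n b e) t) \<in> \<alpha>" for e
    using eval_asg_cong_Con[OF assms t ab] by simp
  moreover have "sym \<alpha>" and "trans \<alpha>"
    using assms by (simp_all add: Con_def is_con_def equiv_def)
  ultimately show "(eval_trm ops (asg n a c) t, eval_trm ops (asg n a d) t) \<in> \<alpha> \<longleftrightarrow>
      (eval_trm ops (asg n b c) t, eval_trm ops (asg n b d) t) \<in> \<alpha>"
    by (meson symD transD)
qed

lemma comm_subset_left: "\<alpha> \<in> Con ar ops \<Longrightarrow> comm ar ops \<alpha> \<beta> \<subseteq> \<alpha>"
  unfolding comm_def using centralizes_left_self by blast

lemma comm_subset_right: "\<beta> \<in> Con ar ops \<Longrightarrow> comm ar ops \<alpha> \<beta> \<subseteq> \<beta>"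
  unfolding comm_def using centralizes_right_self by blast

lemma subset_rimp:
  "\<alpha> \<in> Con ar ops \<Longrightarrow> comm ar ops \<alpha> \<beta> \<subseteq> \<gamma> \<Longrightarrow> \<alpha> \<subseteq> rimp ar ops \<beta> \<gamma>"
  unfolding rimp_def by (rule con_join_upper) blast

lemma comm_rimp_subset:
  assumes distrib: "\<forall>S \<subseteq> Con ar ops. \<forall>\<beta>\<in>Con ar ops.
          comm ar ops (con_join ar ops S) \<beta> = con_join ar ops ((\<lambda>\<alpha>. comm ar ops \<alpha> \<beta>) ` S)"
    and "\<beta> \<in> Con ar ops" and "\<gamma> \<in> Con ar ops"
  shows "comm ar ops (rimp ar ops \<beta> \<gamma>) \<beta> \<subseteq> \<gamma>"
proof -
  let ?S = "{\<alpha> \<in> Con ar ops. comm ar ops \<alpha> \<beta> \<subseteq> \<gamma>}"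
  have "comm ar ops (rimp ar ops \<beta> \<gamma>) \<beta> = con_join ar ops ((\<lambda>\<alpha>. comm ar ops \<alpha> \<beta>) ` ?S)"
    unfolding rimp_def using \<open>\<beta> \<in> Con ar ops\<close> by (intro distrib[rule_format]) auto
  also have "\<dots> \<subseteq> \<gamma>"
    using \<open>\<gamma> \<in> Con ar ops\<close> by (rule con_join_least) blast
  finally show ?thesis .
qed

lemma Spec_subset_Con: "Spec ar ops \<subseteq> Con ar ops"
  by (auto simp: Spec_def is_prime_def)

lemma Id_subset_Spec: "\<phi> \<in> Spec ar ops \<Longrightarrow> Id \<subseteq> \<phi>"
  using Spec_subset_Con Id_subset_Con by blast

lemma SpecD:
  "\<lbrakk>\<phi> \<in> Spec ar ops; \<alpha> \<in> Con ar ops; \<beta> \<in> Con ar ops; comm ar ops \<alpha> \<beta> \<subseteq> \<phi>\<rbrakk>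
    \<Longrightarrow> \<alpha> \<subseteq> \<phi> \<or> \<beta> \<subseteq> \<phi>"
  by (simp add: Spec_def is_prime_def)

lemma Inter_chain_in_Spec:
  assumes "C \<subseteq> Spec ar ops" and "C \<noteq> {}" and chain: "\<forall>\<phi>\<in>C. \<forall>\<psi>\<in>C. \<phi> \<subseteq> \<psi> \<or> \<psi> \<subseteq> \<phi>"
  shows "\<Inter>C \<in> Spec ar ops"
proof -
  have "\<Inter>C \<in> Con ar ops"
    using assms(1) Spec_subset_Con by (intro Inter_in_Con) blast
  moreover have "\<Inter>C \<noteq> UNIV"
  proof
    assume "\<Inter>C = UNIV"
    with \<open>C \<noteq> {}\<close> obtain \<phi> where "\<phi> \<in> C" and "\<phi> = UNIV" by blast
    with assms(1) show False by (auto simp: Spec_def is_prime_def)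
  qed
  moreover have "\<alpha> \<subseteq> \<Inter>C \<or> \<beta> \<subseteq> \<Inter>C"
    if "\<alpha> \<in> Con ar ops" "\<beta> \<in> Con ar ops" "comm ar ops \<alpha> \<beta> \<subseteq> \<Inter>C" for \<alpha> \<beta>
  proof (rule ccontr)
    assume "\<not> (\<alpha> \<subseteq> \<Inter>C \<or> \<beta> \<subseteq> \<Inter>C)"
    then obtain \<phi> \<psi> where "\<phi> \<in> C" "\<not> \<alpha> \<subseteq> \<phi>" "\<psi> \<in> C" "\<not> \<beta> \<subseteq> \<psi>" by blast
    moreover have "\<alpha> \<subseteq> \<chi> \<or> \<beta> \<subseteq> \<chi>" if "\<chi> \<in> C" for \<chi>
      using that assms(1) \<open>comm ar ops \<alpha> \<beta> \<subseteq> \<Inter>C\<close>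
      by (intro SpecD[OF _ \<open>\<alpha> \<in> Con ar ops\<close> \<open>\<beta> \<in> Con ar ops\<close>]) auto
    ultimately show False
      using chain by blast
  qed
  ultimately show ?thesis by (simp add: Spec_def is_prime_def)
qed

lemma MinSpec_below_Spec:
  assumes "\<phi> \<in> Spec ar ops"
  shows "\<exists>\<psi>\<in>MinSpec ar ops. \<psi> \<subseteq> \<phi>"
proof -
  let ?A = "{\<psi> \<in> Spec ar ops. \<psi> \<subseteq> \<phi>}"
  let ?R = "relation_of (\<lambda>\<psi> \<chi>. \<chi> \<subseteq> \<psi>) ?A"
  have order: "partial_order_on ?A ?R"
    by (auto simp: relation_of_def partial_order_on_def preorder_on_def refl_on_def
        trans_def antisym_def)
  have bound: "\<exists>\<chi>\<in>?A. \<forall>\<psi>\<in>C. \<chi> \<subseteq> \<psi>" if "C \<in> Chains ?R" for C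
  proof (cases "C = {}")
    case True
    then show ?thesis using assms by blast
  next
    case False
    have "C \<subseteq> ?A" using Chains_relation_of[OF that] .
    moreover have "\<forall>\<psi>\<in>C. \<forall>\<chi>\<in>C. \<psi> \<subseteq> \<chi> \<or> \<chi> \<subseteq> \<psi>"
      using that by (auto simp: Chains_def relation_of_def)
    ultimately have "\<Inter>C \<in> ?A"
      using Inter_chain_in_Spec[of C] False by blast
    then show ?thesis by blast
  qed
  obtain \<psi> where "\<psi> \<in> ?A" and min: "\<forall>\<chi>\<in>?A. \<chi> \<subseteq> \<psi> \<longrightarrow> \<chi> = \<psi>"
    using predicate_Zorn[OF order bound] by auto
  moreover have "\<psi> \<in> MinSpec ar ops"
    using \<open>\<psi> \<in> ?A\<close> min by (simp add: MinSpec_def) (meson subset_trans)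
  ultimately show ?thesis by blast
qed

lemma Inter_MinSpec_eq_rad_Id: "\<Inter>(MinSpec ar ops) = rad ar ops Id"
proof -
  have "V ar ops Id = Spec ar ops"
    by (auto simp: V_def intro: Id_subset_Spec[THEN subsetD])
  moreover have "\<Inter>(MinSpec ar ops) \<subseteq> \<Inter>(Spec ar ops)"
    using MinSpec_below_Spec by blast
  moreover have "\<Inter>(Spec ar ops) \<subseteq> \<Inter>(MinSpec ar ops)"
    by (auto simp: MinSpec_def)
  ultimately show ?thesis
    unfolding rad_def by blast
qed

lemma perp_in_Con: "perp ar ops \<theta> \<in> Con ar ops"
  by (simp add: perp_def rimp_def con_join_in_Con)

lemma Spec_contains_perp_or_self:
  assumes distrib: "\<forall>S \<subseteq> Con ar ops. \<forall>\<beta>\<in>Con ar ops.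
          comm ar ops (con_join ar ops S) \<beta> = con_join ar ops ((\<lambda>\<alpha>. comm ar ops \<alpha> \<beta>) ` S)"
    and "\<theta> \<in> Con ar ops" and "\<phi> \<in> Spec ar ops"
  shows "perp ar ops \<theta> \<subseteq> \<phi> \<or> \<theta> \<subseteq> \<phi>"
proof (rule SpecD[OF \<open>\<phi> \<in> Spec ar ops\<close> perp_in_Con \<open>\<theta> \<in> Con ar ops\<close>])
  have "comm ar ops (perp ar ops \<theta>) \<theta> \<subseteq> Id"
    unfolding perp_def using distrib \<open>\<theta> \<in> Con ar ops\<close> Id_in_Con by (rule comm_rimp_subset)
  also have "Id \<subseteq> \<phi>"
    using \<open>\<phi> \<in> Spec ar ops\<close> by (rule Id_subset_Spec)
  finally show "comm ar ops (perp ar ops \<theta>) \<theta> \<subseteq> \<phi>" .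
qed

theorem mainTheorem9:
  fixes ar :: "'f \<Rightarrow> nat" and ops :: "'f \<Rightarrow> 'a list \<Rightarrow> 'a" and \<theta> :: "'a rel"
  assumes semi: "semiprime ar ops"
    and comm_sym: "\<forall>\<alpha>\<in>Con ar ops. \<forall>\<beta>\<in>Con ar ops. comm ar ops \<alpha> \<beta> = comm ar ops \<beta> \<alpha>"
    and comm_distrib: "\<forall>S \<subseteq> Con ar ops. \<forall>\<beta>\<in>Con ar ops.
          comm ar ops (con_join ar ops S) \<beta> = con_join ar ops ((\<lambda>\<alpha>. comm ar ops \<alpha> \<beta>) ` S)"
    and theta: "\<theta> \<in> Con ar ops"
  shows "perp ar ops \<theta> = \<Inter>(V ar ops (perp ar ops \<theta>) \<inter> MinSpec ar ops)"
proof
  let ?X = "\<Inter>(V ar ops (perp ar ops \<theta>) \<inter> MinSpec ar ops)"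
  show "perp ar ops \<theta> \<subseteq> ?X"
    by (auto simp: V_def)
  have X_Con: "?X \<in> Con ar ops"
    using Spec_subset_Con by (intro Inter_in_Con) (auto simp: V_def)
  have "comm ar ops ?X \<theta> \<subseteq> \<psi>" if "\<psi> \<in> MinSpec ar ops" for \<psi>
  proof -
    have "\<psi> \<in> Spec ar ops" using that by (simp add: MinSpec_def)
    with Spec_contains_perp_or_self[OF comm_distrib theta]
    consider "perp ar ops \<theta> \<subseteq> \<psi>" | "\<theta> \<subseteq> \<psi>" by blast
    then show ?thesis
    proof cases
      case 1
      with that \<open>\<psi> \<in> Spec ar ops\<close> have "?X \<subseteq> \<psi>" by (auto simp: V_def)
      then show ?thesis using comm_subset_left[OF X_Con] by blast
    next
      case 2
      then show ?thesis using comm_subset_right[OF theta] by blast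
    qed
  qed
  then have "comm ar ops ?X \<theta> \<subseteq> Id"
    using semi Inter_MinSpec_eq_rad_Id unfolding semiprime_def by blast
  then show "?X \<subseteq> perp ar ops \<theta>"
    using subset_rimp[OF X_Con] by (simp add: perp_def)
qed

end
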